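(* Let $V$ be a vector space over a field $F$, let $n\ge1$, and let $(p_j^+,p_j^-)_{j=1}^n$ be a valid widget in $V$. Fix $i\in\{1,\dots,n\}$ and $c\in F$. Then the widget obtained by replacing $p_i^+$ with $p_i^+ + c\,p_i^-$ (and leaving all other points unchanged) is again valid.
   Context: A widget with $n$ pairs in $V$ is an indexed family of $n$ pairs of vectors $p_j=(p_j^+,p_j^-)$, $j=1,\dots,n$, in $V$. A section of a widget is a set of points containing at most one point from each pair. A widget with $n$ pairs is legal if every section spans a linear subspace of $V$ of dimension at most $n-1$. A widget with $n$ pairs is full if the linear span of all its $2n$ points has dimension at least $n$. A widget is valid if it is both legal and full. *)

theory Defs
  imports Main "HOL.Vector_Spaces"
begin

text \<open>A widget with n pairs is a family p :: nat => 'v * 'v, indexed by j in {1..n};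
  p j = (p_j^+, p_j^-) (fst = plus point, snd = minus point).\<close>

definition widget_section :: "nat \<Rightarrow> (nat \<Rightarrow> 'v \<times> 'v) \<Rightarrow> 'v set \<Rightarrow> bool" where
  "widget_section n p S \<longleftrightarrow>
     (\<exists>J \<sigma>. J \<subseteq> {1..n} \<and> (\<forall>j\<in>J. \<sigma> j \<in> {fst (p j), snd (p j)}) \<and> S = \<sigma> ` J)"

definition widget_points :: "nat \<Rightarrow> (nat \<Rightarrow> 'v \<times> 'v) \<Rightarrow> 'v set" where
  "widget_points n p = fst ` p ` {1..n} \<union> snd ` p ` {1..n}"

context vector_space
begin

definition legal_widget :: "nat \<Rightarrow> (nat \<Rightarrow> 'b \<times> 'b) \<Rightarrow> bool" where
  "legal_widget n p \<longleftrightarrow> (\<forall>S. widget_section n p S \<longrightarrow> dim (span S) \<le> n - 1)"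

definition full_widget :: "nat \<Rightarrow> (nat \<Rightarrow> 'b \<times> 'b) \<Rightarrow> bool" where
  "full_widget n p \<longleftrightarrow> dim (span (widget_points n p)) \<ge> n"

definition valid_widget :: "nat \<Rightarrow> (nat \<Rightarrow> 'b \<times> 'b) \<Rightarrow> bool" where
  "valid_widget n p \<longleftrightarrow> legal_widget n p \<and> full_widget n p"

end

end

theory Submission
  imports Defs
begin

text \<open>Shearing the i-th pair changes only sections through the new point
  x = a + c b, where (a, b) = p i.  Such a section has the form insert x R with R
  spanned by the other chosen points, and x \<in> span (insert a (insert b R)); hence its
  dimension is at most that of one of the old sections insert a R and insert b R:
  of insert a R if b \<in> span R, of insert b R otherwise.  Fullness survives because
  a = x - c b lies in the span of the new points.\<close>

context vector_space
begin

text \<open>Library versions of the next two lemmas live in \<open>finite_dimensional_vector_space\<close>;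
  here the ambient space may be infinite-dimensional, so finiteness of the spanning set
  is assumed instead.\<close>

lemma dim_mono_finite:
  assumes "V \<subseteq> span W" "finite W"
  shows "dim V \<le> dim W"
proof -
  obtain B where B: "B \<subseteq> W" "independent B" "W \<subseteq> span B" "card B = dim W"
    using basis_exists[of W] by blast
  have "V \<subseteq> span B"
    using assms(1) B(3) span_minimal[OF _ subspace_span] by blast
  then have "dim V \<le> card B"
    using dim_le_card B(1) assms(2) finite_subset by blast
  with B(4) show ?thesis by simp
qed

lemma dim_insert_finite:
  assumes "finite S"
  shows "dim (insert x S) = (if x \<in> span S then dim S else dim S + 1)"
proof (cases "x \<in> span S")
  case True
  then show ?thesis by (metis dim_span span_redundant)
next
  case False
  obtain B where B: "B \<subseteq> S" "independent B" "S \<subseteq> span B" "card B = dim S"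
    using basis_exists[of S] by blast
  have "x \<notin> span B"
    using False span_mono[OF B(1)] by blast
  have "dim (insert x S) = card (insert x B)"
  proof (rule dim_unique)
    show "insert x B \<subseteq> insert x S"
      using B(1) by blast
    show "insert x S \<subseteq> span (insert x B)"
      using B(3) span_mono[of B "insert x B"] span_base[of x "insert x B"] by auto
    show "independent (insert x B)"
      using independent_insertI[OF \<open>x \<notin> span B\<close> B(2)] .
  qed simp
  also have "\<dots> = dim S + 1"
  proof -
    have "finite B"
      using B(1) assms by (rule finite_subset)
    moreover have "x \<notin> B"
      using \<open>x \<notin> span B\<close> span_base by blast
    ultimately show ?thesis
      using B(4) by simp
  qed
  finally show ?thesis using False by simp
qed

lemma dim_insert_le_max:
  assumes "finite R" "x \<in> span (insert a (insert b R))"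
  shows "dim (insert x R) \<le> max (dim (insert a R)) (dim (insert b R))"
proof (cases "b \<in> span R")
  case True
  then have "b \<in> span (insert a R)"
    using span_mono[of R "insert a R"] by blast
  then have "span (insert b (insert a R)) = span (insert a R)"
    by (rule span_redundant)
  then have "x \<in> span (insert a R)"
    using assms(2) by (simp add: insert_commute)
  then have "insert x R \<subseteq> span (insert a R)"
    using span_superset[of "insert a R"] by blast
  then have "dim (insert x R) \<le> dim (insert a R)"
    by (rule dim_mono_finite) (simp add: assms(1))
  then show ?thesis by simp
next
  case False
  have "dim (insert x R) \<le> dim R + 1"
    using dim_insert_finite[OF assms(1), of x] by simp
  also have "\<dots> = dim (insert b R)"
    using dim_insert_finite[OF assms(1), of b] False by simp
  finally show ?thesis by simp
qed

definition shear_widget :: "nat \<Rightarrow> 'a \<Rightarrow> (nat \<Rightarrow> 'b \<times> 'b) \<Rightarrow> nat \<Rightarrow> 'b \<times> 'b" where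
  "shear_widget i c p = p(i := (fst (p i) + scale c (snd (p i)), snd (p i)))"

lemma widget_section_shear_widget:
  assumes "widget_section n (shear_widget i c p) S"
  obtains "widget_section n p S"
  | R where "S = insert (fst (p i) + scale c (snd (p i))) R" "finite R"
      "widget_section n p (insert (fst (p i)) R)"
      "widget_section n p (insert (snd (p i)) R)"
proof -
  let ?x = "fst (p i) + scale c (snd (p i))"
  obtain J \<sigma> where J: "J \<subseteq> {1..n}"
    and \<sigma>: "\<forall>j\<in>J. \<sigma> j \<in> {fst (shear_widget i c p j), snd (shear_widget i c p j)}"
    and S: "S = \<sigma> ` J"
    using assms unfolding widget_section_def by blast
  have \<sigma>_old: "\<forall>j\<in>J - {i}. \<sigma> j \<in> {fst (p j), snd (p j)}"
    using \<sigma> by (auto simp: shear_widget_def)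
  show thesis
  proof (cases "i \<in> J \<and> \<sigma> i = ?x")
    case False
    have "\<sigma> j \<in> {fst (p j), snd (p j)}" if "j \<in> J" for j
      using \<sigma> \<sigma>_old False that by (cases "j = i") (auto simp: shear_widget_def)
    then show thesis
      using that(1) J S unfolding widget_section_def by blast
  next
    case True
    define R where "R = \<sigma> ` (J - {i})"
    have "S = insert ?x R"
      using True S unfolding R_def by (metis image_insert insert_Diff)
    moreover have "finite R"
      using J unfolding R_def by (meson finite_Diff finite_atLeastAtMost finite_imageI finite_subset)
    moreover have "widget_section n p (insert v R)" if "v \<in> {fst (p i), snd (p i)}" for v
      unfolding widget_section_def
      by (rule exI[of _ J], rule exI[of _ "\<sigma>(i := v)"])
        (use J \<sigma>_old True that in \<open>auto simp: R_def\<close>)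
    ultimately show thesis
      using that(2) by blast
  qed
qed

lemma legal_shear_widget:
  assumes "legal_widget n p"
  shows "legal_widget n (shear_widget i c p)"
  unfolding legal_widget_def dim_span
proof (intro allI impI)
  fix S assume "widget_section n (shear_widget i c p) S"
  then show "dim S \<le> n - 1"
  proof (cases rule: widget_section_shear_widget)
    case 1
    then show ?thesis using assms unfolding legal_widget_def by simp
  next
    case (2 R)
    have "fst (p i) + scale c (snd (p i)) \<in> span (insert (fst (p i)) (insert (snd (p i)) R))"
      by (intro span_add span_scale span_base) auto
    then have "dim S \<le> max (dim (insert (fst (p i)) R)) (dim (insert (snd (p i)) R))"
      using 2 dim_insert_le_max by simp
    moreover have "dim (insert (fst (p i)) R) \<le> n - 1" "dim (insert (snd (p i)) R) \<le> n - 1"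
      using 2 assms unfolding legal_widget_def by simp_all
    ultimately show ?thesis by simp
  qed
qed

lemma widget_points_subset_span_shear_widget:
  assumes "i \<in> {1..n}"
  shows "widget_points n p \<subseteq> span (widget_points n (shear_widget i c p))"
proof
  let ?q = "shear_widget i c p"
  let ?P = "widget_points n ?q"
  have new_points: "fst (?q j) \<in> span ?P" "snd (?q j) \<in> span ?P" if "j \<in> {1..n}" for j
    using that by (auto intro!: span_base simp: widget_points_def)
  fix y assume "y \<in> widget_points n p"
  then obtain j where j: "j \<in> {1..n}" and y: "y = fst (p j) \<or> y = snd (p j)"
    unfolding widget_points_def by blast
  show "y \<in> span ?P"
  proof (cases "j = i")
    case True
    have x: "fst (p i) + scale c (snd (p i)) \<in> span ?P"
      and b: "snd (p i) \<in> span ?P"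
      using new_points[OF assms] by (simp_all add: shear_widget_def)
    have "fst (p i) = (fst (p i) + scale c (snd (p i))) - scale c (snd (p i))"
      by simp
    then have "fst (p i) \<in> span ?P"
      using span_diff[OF x span_scale[OF b]] by metis
    with b y True show ?thesis by blast
  next
    case False
    then show ?thesis
      using new_points[OF j] y by (auto simp: shear_widget_def)
  qed
qed

lemma full_shear_widget:
  assumes "full_widget n p" "i \<in> {1..n}"
  shows "full_widget n (shear_widget i c p)"
proof -
  have "dim (widget_points n p) \<le> dim (widget_points n (shear_widget i c p))"
    using widget_points_subset_span_shear_widget[OF assms(2)]
    by (rule dim_mono_finite) (simp add: widget_points_def)
  with assms(1) show ?thesis unfolding full_widget_def by simp
qed

lemma valid_shear_widget:
  assumes "valid_widget n p" "i \<in> {1..n}"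
  shows "valid_widget n (shear_widget i c p)"
  using assms legal_shear_widget full_shear_widget unfolding valid_widget_def by blast

end

theorem lemma2:
  fixes scale :: "'a::field \<Rightarrow> 'v::ab_group_add \<Rightarrow> 'v"
    and n :: nat and p :: "nat \<Rightarrow> 'v \<times> 'v" and i :: nat and c :: 'a
  assumes "vector_space scale"
    and "n \<ge> 1"
    and "vector_space.valid_widget scale n p"
    and "i \<in> {1..n}"
  shows "vector_space.valid_widget scale n
           (p(i := (fst (p i) + scale c (snd (p i)), snd (p i))))"
  using vector_space.valid_shear_widget[OF assms(1,3,4), of c]
  unfolding vector_space.shear_widget_def[OF assms(1)] .

end
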